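(* Let $\phi:\mathbb{N}_0\to\mathbb{N}_0$ satisfy $\phi(0)=0$ and $\phi(x)\neq x$ for all $x\in\mathbb{N}$, and let $n\ge2$. If the local function $\phi_n$ has no cycle, then $M_n(\phi)^k\cap M_n(\phi)^l=0$ for all $k\ne l$ with $k,l\ge1$.
   Context: $\mathbb{N}=\{1,2,\dots\}$, $\mathbb{N}_0=\mathbb{N}\cup\{0\}$, $D_n=\{1,\dots,n\}$, $D_{n,0}=D_n\cup\{0\}$. The local function $\phi_n:D_{n,0}\to D_{n,0}$ is $\phi_n(x)=\phi(x)$ if $x\in D_n$ and $\phi(x)\in D_n$, and $\phi_n(x)=0$ otherwise. "$\phi_n$ has no cycle" means there are no $m\ge2$ and $x\in D_n$ with $\phi_n^m(x)=x$. For $1\le i\le n$, $\mathbf{e}_i$ is the $i$-th unit vector in $\mathbb{Z}^n$ and $\mathbf{e}_0$ the zero vector. $M_n(\phi)$ is the $n\times n$ matrix whose $j$-th column is $\mathbf{e}_{\phi_n(j)}$. For $n\times n$ matrices $A,B$, $A\cap B$ is the number of index pairs $(i,j)$ with $A_{ij}B_{ij}\neq0$. *)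

theory Defs
  imports "Jordan_Normal_Form.Matrix"
begin

definition local_fun :: "(nat \<Rightarrow> nat) \<Rightarrow> nat \<Rightarrow> nat \<Rightarrow> nat" where
  "local_fun \<phi> n x = (if 1 \<le> x \<and> x \<le> n \<and> 1 \<le> \<phi> x \<and> \<phi> x \<le> n then \<phi> x else 0)"

definition has_no_cycle :: "(nat \<Rightarrow> nat) \<Rightarrow> nat \<Rightarrow> bool" where
  "has_no_cycle \<phi> n \<longleftrightarrow>
     \<not> (\<exists>m x. m \<ge> 2 \<and> 1 \<le> x \<and> x \<le> n \<and> (local_fun \<phi> n ^^ m) x = x)"

text \<open>M_n(phi): n x n integer matrix whose j-th column is e_{phi_n(j)} (e_0 = zero vector).
  Jordan_Normal_Form matrices are 0-indexed, so paper entry (i,j) is stored at (i-1,j-1).\<close>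
definition M_mat :: "nat \<Rightarrow> (nat \<Rightarrow> nat) \<Rightarrow> int mat" where
  "M_mat n \<phi> = mat n n (\<lambda>(i, j). if local_fun \<phi> n (j + 1) = i + 1 then 1 else 0)"

definition mat_meet :: "int mat \<Rightarrow> int mat \<Rightarrow> nat" where
  "mat_meet A B = card {(i, j). i < dim_row A \<and> j < dim_col A \<and> A $$ (i, j) * B $$ (i, j) \<noteq> 0}"

end

theory Submission
  imports Defs
begin

text \<open>Column j of M_n(\<phi>) is e_{\<phi>_n(j)}, so M_n(\<phi>) is the matrix of the map \<phi>_n on
  D_{n,0} with 0 as an absorbing state. Such matrices multiply like the maps they represent,
  hence M_n(\<phi>)^k is the matrix of \<phi>_n^k, and M_n(\<phi>)^k and M_n(\<phi>)^l share a nonzero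
  entry exactly when \<phi>_n^k(x) = \<phi>_n^l(x) \<noteq> 0 for some x \<in> D_n. For k < l this makes
  y = \<phi>_n^k(x) a point of D_n with \<phi>_n^{l-k}(y) = y: a cycle if l - k \<ge> 2 and a fixed
  point of \<phi> if l - k = 1, both excluded.\<close>

definition fun_mat :: "nat \<Rightarrow> (nat \<Rightarrow> nat) \<Rightarrow> int mat" where
  "fun_mat n f = mat n n (\<lambda>(i, j). if f (j + 1) = i + 1 then 1 else 0)"

lemma dim_fun_mat [simp]:
  "dim_row (fun_mat n f) = n" "dim_col (fun_mat n f) = n"
  by (simp_all add: fun_mat_def)

lemma index_fun_mat [simp]:
  "i < n \<Longrightarrow> j < n \<Longrightarrow> fun_mat n f $$ (i, j) = (if f (j + 1) = i + 1 then 1 else 0)"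
  by (simp add: fun_mat_def)

lemma fun_mat_id: "fun_mat n id = 1\<^sub>m n"
  by (rule eq_matI) auto

lemma fun_mat_mult:
  assumes "g 0 = 0" and "\<And>j. j < n \<Longrightarrow> f (j + 1) \<le> n"
  shows "fun_mat n g * fun_mat n f = fun_mat n (g \<circ> f)"
proof (rule eq_matI)
  fix i j
  assume ij: "i < dim_row (fun_mat n (g \<circ> f))" "j < dim_col (fun_mat n (g \<circ> f))"
  have "(fun_mat n g * fun_mat n f) $$ (i, j) =
      (\<Sum>l<n. (if g (l + 1) = i + 1 then 1 else 0) * (if f (j + 1) = l + 1 then 1 else 0))"
    using ij by (auto simp: scalar_prod_def lessThan_atLeast0 intro!: sum.cong)
  also have "\<dots> = (if g (f (j + 1)) = i + 1 then 1 else 0)"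
  proof (cases "f (j + 1)")
    case 0
    then show ?thesis using assms(1) by simp
  next
    case (Suc m)
    then have "m < n" using assms(2) ij by fastforce
    then show ?thesis using Suc by (simp add: if_distrib[where f = "\<lambda>a. _ * a"] sum.delta' cong: if_cong)
  qed
  finally show "(fun_mat n g * fun_mat n f) $$ (i, j) = fun_mat n (g \<circ> f) $$ (i, j)"
    using ij by simp
qed auto

lemma fun_mat_pow:
  assumes "f 0 = 0" and "\<And>x. x \<le> n \<Longrightarrow> f x \<le> n"
  shows "fun_mat n f ^\<^sub>m k = fun_mat n (f ^^ k)"
proof (induction k)
  case 0
  show ?case by (simp add: fun_mat_id[unfolded id_def])
next
  case (Suc k)
  have "(f ^^ k) 0 = 0" using assms(1) by (induction k) simp_all
  then show ?case
    using Suc assms(2) by (simp add: fun_mat_mult funpow_Suc_right comp_def del: funpow.simps)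
qed

lemma mat_meet_fun_mat_eq_0:
  assumes "\<And>x. 1 \<le> x \<Longrightarrow> x \<le> n \<Longrightarrow> f x = g x \<Longrightarrow> f x = 0"
  shows "mat_meet (fun_mat n f) (fun_mat n g) = 0"
proof -
  have "\<not> (i < n \<and> j < n \<and> fun_mat n f $$ (i, j) * fun_mat n g $$ (i, j) \<noteq> 0)" for i j
    using assms[of "j + 1"] by auto
  then have "{(i, j). i < n \<and> j < n \<and> fun_mat n f $$ (i, j) * fun_mat n g $$ (i, j) \<noteq> 0} = {}"
    by blast
  then show ?thesis unfolding mat_meet_def dim_fun_mat by (simp only: card.empty)
qed

lemma M_mat_eq_fun_mat: "M_mat n \<phi> = fun_mat n (local_fun \<phi> n)"
  by (simp add: M_mat_def fun_mat_def)

lemma local_fun_zero: "local_fun \<phi> n 0 = 0"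
  by (simp add: local_fun_def)

lemma local_fun_le: "local_fun \<phi> n x \<le> n"
  by (simp add: local_fun_def)

lemma funpow_local_fun_le: "x \<le> n \<Longrightarrow> (local_fun \<phi> n ^^ k) x \<le> n"
  by (induction k) (simp_all add: local_fun_le)

lemma funpow_eq_imp_periodic:
  assumes "k \<le> l" and "(f ^^ k) x = (f ^^ l) x"
  shows "(f ^^ (l - k)) ((f ^^ k) x) = (f ^^ k) x"
  using assms by (metis funpow_add le_add_diff_inverse2 o_apply)

lemma local_fun_no_periodic_point:
  assumes "\<And>x. x \<ge> 1 \<Longrightarrow> \<phi> x \<noteq> x" and "has_no_cycle \<phi> n"
    and "m \<ge> 1" and "1 \<le> y" and "y \<le> n"
  shows "(local_fun \<phi> n ^^ m) y \<noteq> y"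
proof (cases "m = 1")
  case True
  then show ?thesis using assms(1,4) by (simp add: local_fun_def)
next
  case False
  then show ?thesis using assms(2-5) by (auto simp: has_no_cycle_def)
qed

lemma funpow_local_fun_eq_imp_zero:
  assumes "\<And>x. x \<ge> 1 \<Longrightarrow> \<phi> x \<noteq> x" and "has_no_cycle \<phi> n"
    and "k \<noteq> l" and "x \<le> n" and "(local_fun \<phi> n ^^ k) x = (local_fun \<phi> n ^^ l) x"
  shows "(local_fun \<phi> n ^^ k) x = 0"
proof -
  have periodic_point: "(local_fun \<phi> n ^^ (b - a)) y = y \<Longrightarrow> a < b \<Longrightarrow> y \<le> n \<Longrightarrow> y = 0"
    for a b y
    using local_fun_no_periodic_point[OF assms(1,2), of "b - a" y] by linarith
  show ?thesis
  proof (cases "k < l")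
    case True
    then show ?thesis
      using periodic_point funpow_eq_imp_periodic[OF _ assms(5)] funpow_local_fun_le[OF assms(4)]
      by simp
  next
    case False
    then have "l < k" using assms(3) by simp
    then show ?thesis
      using periodic_point funpow_eq_imp_periodic[OF _ assms(5)[symmetric]]
        funpow_local_fun_le[OF assms(4)] assms(5)
      by simp
  qed
qed

theorem proposition3p5:
  fixes \<phi> :: "nat \<Rightarrow> nat" and n :: nat
  assumes "\<phi> 0 = 0"
    and "\<And>x. x \<ge> 1 \<Longrightarrow> \<phi> x \<noteq> x"
    and "n \<ge> 2"
    and "has_no_cycle \<phi> n"
  shows "\<forall>k l. k \<ge> 1 \<longrightarrow> l \<ge> 1 \<longrightarrow> k \<noteq> l \<longrightarrow>
           mat_meet (M_mat n \<phi> ^\<^sub>m k) (M_mat n \<phi> ^\<^sub>m l) = 0"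
proof (intro allI impI)
  fix k l :: nat
  assume "k \<noteq> l"
  have pow: "M_mat n \<phi> ^\<^sub>m m = fun_mat n (local_fun \<phi> n ^^ m)" for m
    unfolding M_mat_eq_fun_mat by (rule fun_mat_pow) (simp_all add: local_fun_zero local_fun_le)
  show "mat_meet (M_mat n \<phi> ^\<^sub>m k) (M_mat n \<phi> ^\<^sub>m l) = 0"
    unfolding pow
    by (rule mat_meet_fun_mat_eq_0) (rule funpow_local_fun_eq_imp_zero[OF assms(2,4) \<open>k \<noteq> l\<close>])
qed

end
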